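(* Let $f(a,b,c,d,e,x,y)$ be analytic in a neighbourhood of the origin of $\mathbb{C}^7$, and for fixed $(a,b,c,d,e)$ write $F(X,Y)=f(a,b,c,d,e,X,Y)$. The following are equivalent. (i) In some neighbourhood of the origin, $f$ satisfies $$x\Big\{F(x,y)-F(x,yq)-(d+e)q^{-1}\big[F(x,yq)-F(x,yq^2)\big]+de\,q^{-2}\big[F(x,yq^2)-F(x,yq^3)\big]\Big\}$$ $$=y\Big\{\big[F(x,y)-F(xq,y)\big]-(a+b+c)\big[F(x,yq)-F(xq,yq)\big]+(ab+ac+bc)\big[F(x,yq^2)-F(xq,yq^2)\big]-abc\big[F(x,yq^3)-F(xq,yq^3)\big]\Big\}.$$ (ii) $f$ can be expanded in terms of the polynomials $\phi_n^{(a,b,c;d,e)}(x,y|q)$. That is, there exist functions $\mu_n=\mu_n(a,b,c,d,e)$, $n\ge 0$, defined near the origin of $\mathbb{C}^5$, such that $$f(a,b,c,d,e,x,y)=\sum_{n\ge0}\mu_n\,\phi_n^{(a,b,c;d,e)}(x,y|q).$$ This identity is meant as an identity of power series in $(x,y)$: for all $j,k\ge0$, the coefficient of $x^jy^k$ in the Taylor expansion of $f$ in $(x,y)$ equals $\mu_{j+k}$ times the coefficient of $x^jy^k$ in $\phi_{j+k}^{(a,b,c;d,e)}(x,y|q)$. Moreover, in this case $\sum_n\mu_n x^n=f(a,b,c,d,e,x,0)$.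
   Context: Throughout, $0<q<1$. For $\alpha\in\mathbb{C}$, $(\alpha;q)_0=1$, $(\alpha;q)_n=\prod_{j=0}^{n-1}(1-\alpha q^j)$ and $(\alpha;q)_\infty=\prod_{j\ge0}(1-\alpha q^j)$. Also $(\alpha_1,\dots,\alpha_r;q)_n=\prod_i(\alpha_i;q)_n$. The $q$-binomial coefficient is $\begin{bmatrix}n\\k\end{bmatrix}=\frac{(q;q)_n}{(q;q)_k(q;q)_{n-k}}$. The generalized Al-Salam–Carlitz polynomials are $$\phi_n^{(a,b,c;d,e)}(x,y|q)=\sum_{k=0}^n\begin{bmatrix}n\\k\end{bmatrix}\frac{(a,b,c;q)_k}{(d,e;q)_k}x^{n-k}y^k,$$ defined whenever $d,e\notin\{q^{-m}:m\ge0\}$ (in particular near $d=e=0$). *)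

theory Defs
  imports "HOL-Analysis.Analysis"
begin

type_synonym fun7 = "complex \<Rightarrow> complex \<Rightarrow> complex \<Rightarrow> complex \<Rightarrow> complex \<Rightarrow> complex \<Rightarrow> complex \<Rightarrow> complex"

definition qpoch :: "complex \<Rightarrow> real \<Rightarrow> nat \<Rightarrow> complex" where
  "qpoch \<alpha> q n = (\<Prod>j<n. 1 - \<alpha> * complex_of_real q ^ j)"

definition qbinom :: "real \<Rightarrow> nat \<Rightarrow> nat \<Rightarrow> complex" where
  "qbinom q n k = qpoch (complex_of_real q) q n / (qpoch (complex_of_real q) q k * qpoch (complex_of_real q) q (n - k))"

definition phi_coeff :: "real \<Rightarrow> complex \<Rightarrow> complex \<Rightarrow> complex \<Rightarrow> complex \<Rightarrow> complex \<Rightarrow> nat \<Rightarrow> nat \<Rightarrow> complex" where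
  "phi_coeff q a b c d e n k =
     qbinom q n k * (qpoch a q k * qpoch b q k * qpoch c q k) / (qpoch d q k * qpoch e q k)"

definition phi :: "real \<Rightarrow> complex \<Rightarrow> complex \<Rightarrow> complex \<Rightarrow> complex \<Rightarrow> complex \<Rightarrow> nat \<Rightarrow> complex \<Rightarrow> complex \<Rightarrow> complex" where
  "phi q a b c d e n x y = (\<Sum>k\<le>n. phi_coeff q a b c d e n k * x ^ (n - k) * y ^ k)"

text \<open>Analyticity in a neighbourhood of the origin of C^7: f is given by an
  (unconditionally, hence absolutely) convergent power series on some polydisc around 0.\<close>
definition analytic_near0_7 :: "fun7 \<Rightarrow> bool" where
  "analytic_near0_7 f \<longleftrightarrow>
     (\<exists>r>0. \<exists>C :: nat \<times> nat \<times> nat \<times> nat \<times> nat \<times> nat \<times> nat \<Rightarrow> complex.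
        \<forall>a b c d e x y. norm a < r \<and> norm b < r \<and> norm c < r \<and> norm d < r \<and> norm e < r
            \<and> norm x < r \<and> norm y < r \<longrightarrow>
          ((\<lambda>(i1, i2, i3, i4, i5, i6, i7).
               C (i1, i2, i3, i4, i5, i6, i7) * a ^ i1 * b ^ i2 * c ^ i3 * d ^ i4 * e ^ i5
                 * x ^ i6 * y ^ i7) has_sum f a b c d e x y) UNIV)"

definition xy_coeff :: "fun7 \<Rightarrow> complex \<Rightarrow> complex \<Rightarrow> complex \<Rightarrow> complex \<Rightarrow> complex \<Rightarrow> nat \<Rightarrow> nat \<Rightarrow> complex" where
  "xy_coeff f a b c d e j k =
     (deriv ^^ j) (\<lambda>X. (deriv ^^ k) (\<lambda>Y. f a b c d e X Y) 0) 0 / (fact j * fact k)"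

definition qdiff_eq :: "real \<Rightarrow> fun7 \<Rightarrow> complex \<Rightarrow> complex \<Rightarrow> complex \<Rightarrow> complex \<Rightarrow> complex \<Rightarrow> complex \<Rightarrow> complex \<Rightarrow> bool" where
  "qdiff_eq q f a b c d e x y \<longleftrightarrow>
     (let F = f a b c d e; Q = complex_of_real q in
      x * ( F x y - F x (y * Q)
            - (d + e) / Q * (F x (y * Q) - F x (y * Q ^ 2))
            + d * e / Q ^ 2 * (F x (y * Q ^ 2) - F x (y * Q ^ 3)))
      = y * ( (F x y - F (x * Q) y)
            - (a + b + c) * (F x (y * Q) - F (x * Q) (y * Q))
            + (a * b + a * c + b * c) * (F x (y * Q ^ 2) - F (x * Q) (y * Q ^ 2))
            - a * b * c * (F x (y * Q ^ 3) - F (x * Q) (y * Q ^ 3))))"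

end

theory Submission
  imports Defs
begin

text \<open>
  Expand \<open>F(x,y) = \<Sum> G(j,k) x^j y^k\<close>. Both brackets of the q-difference equation act
  diagonally on monomials: they multiply \<open>x^j y^k\<close> by
  \<open>L(k) = (1 - q^k)(1 - d q^(k-1))(1 - e q^(k-1))\<close> and by
  \<open>M(j,k) = (1 - q^j)(1 - a q^k)(1 - b q^k)(1 - c q^k)\<close>, respectively.
  Comparing coefficients, the equation is equivalent to the recurrence
  \<open>G(j,k+1) L(k+1) = G(j+1,k) M(j+1,k)\<close>. For small \<open>d, e\<close> the factors \<open>L(k+1)\<close> do not vanish,
  so the recurrence determines \<open>G\<close> from the row \<open>G(n,0)\<close>, and the coefficients of \<open>\<phi>\<^sub>n\<close>
  satisfy it; hence its solutions are exactly \<open>G(j,k) = \<mu>\<^sub>j\<^sub>+\<^sub>k \<cdot> [coefficient of x^j y^k in \<phi>\<^sub>j\<^sub>+\<^sub>k]\<close>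
  with \<open>\<mu>\<^sub>n = G(n,0)\<close>, and putting \<open>y = 0\<close> gives \<open>\<Sum> \<mu>\<^sub>n x^n = f(x,0)\<close>.
\<close>

definition has_double_powser ::
    "(nat \<times> nat \<Rightarrow> complex) \<Rightarrow> real \<Rightarrow> (complex \<Rightarrow> complex \<Rightarrow> complex) \<Rightarrow> bool" where
  "has_double_powser G r H \<longleftrightarrow> (\<forall>x y. norm x < r \<longrightarrow> norm y < r \<longrightarrow>
      ((\<lambda>p. G p * x ^ fst p * y ^ snd p) has_sum H x y) UNIV)"

lemma higher_deriv_powser_at_0:
  fixes a :: "nat \<Rightarrow> complex"
  assumes "r > 0" and "\<And>z. norm z < r \<Longrightarrow> (\<lambda>n. a n * z ^ n) sums g z"
  shows "(deriv ^^ n) g 0 = fact n * a n"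
proof -
  have "eventually (\<lambda>z. z \<in> ball 0 r) (nhds (0::complex))"
    using assms(1) by (intro eventually_nhds_in_open) auto
  hence "eventually (\<lambda>z. (\<lambda>n. fps_nth (Abs_fps a) n * z ^ n) sums g z) (nhds 0)"
    by eventually_elim (simp add: assms(2))
  hence "g has_fps_expansion Abs_fps a"
    by (rule has_fps_expansionI)
  from fps_nth_fps_expansion[OF this, of n] show ?thesis
    by simp
qed

lemma has_sum_infsum_rows:
  fixes g :: "'a \<Rightarrow> 'b \<Rightarrow> complex"
  assumes "((\<lambda>(x, y). g x y) has_sum s) UNIV"
  shows "g x summable_on UNIV" and "((\<lambda>x. \<Sum>\<^sub>\<infinity>y. g x y) has_sum s) UNIV"
proof -
  have Sigma: "((\<lambda>(x, y). g x y) has_sum s) (Sigma UNIV (\<lambda>_. UNIV))"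
    using assms by simp
  show row: "g x summable_on UNIV" for x
    using summable_on_SigmaD1[OF has_sum_imp_summable[OF Sigma]] by simp
  show "((\<lambda>x. \<Sum>\<^sub>\<infinity>y. g x y) has_sum s) UNIV"
    using Sigma by (rule has_sum_Sigma') (simp add: row)
qed

lemma has_double_powser_coeff:
  assumes r: "r > 0" and H: "has_double_powser G r H"
  shows "(deriv ^^ j) (\<lambda>X. (deriv ^^ k) (\<lambda>Y. H X Y) 0) 0 / (fact j * fact k) = G (j, k)"
proof -
  define h where "h k X = (\<Sum>\<^sub>\<infinity>j. G (j, k) * X ^ j)" for k X
  have by_rows: "((\<lambda>(k, j). G (j, k) * X ^ j * Y ^ k) has_sum H X Y) UNIV"
    if "norm X < r" "norm Y < r" for X Y
    using H that has_sum_swap[where f = "\<lambda>p. G p * X ^ fst p * Y ^ snd p" and A = UNIV and B = UNIV]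
    unfolding has_double_powser_def by simp blast
  have row: "(\<lambda>j. G (j, k) * X ^ j) sums h k X" if X: "norm X < r" for X k
  proof -
    define y0 :: complex where "y0 = of_real (r / 2)"
    have y0: "norm y0 < r" "y0 \<noteq> 0"
      using r by (auto simp: y0_def)
    have "(\<lambda>j. G (j, k) * X ^ j * y0 ^ k) summable_on UNIV"
      using has_sum_infsum_rows(1)[OF by_rows[OF X y0(1)]] .
    hence "(\<lambda>j. G (j, k) * X ^ j) summable_on UNIV"
      using summable_on_cmult_left'[of "y0 ^ k" "\<lambda>j. G (j, k) * X ^ j"] y0(2) by simp
    thus ?thesis
      unfolding h_def by (intro has_sum_imp_sums has_sum_infsum)
  qed
  have "(\<lambda>k. h k X * Y ^ k) sums H X Y" if "norm X < r" "norm Y < r" for X Y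
    using has_sum_infsum_rows(2)[OF by_rows[OF that]]
    by (intro has_sum_imp_sums) (simp add: h_def infsum_cmult_left')
  hence "(deriv ^^ k) (\<lambda>Y. H X Y) 0 = fact k * h k X" if "norm X < r" for X
    using that r by (intro higher_deriv_powser_at_0) auto
  hence "(\<lambda>j. (fact k * G (j, k)) * X ^ j) sums (deriv ^^ k) (\<lambda>Y. H X Y) 0"
    if "norm X < r" for X
    using sums_mult[OF row[OF that], of "fact k"] that by (simp add: mult.assoc)
  from higher_deriv_powser_at_0[OF r this, of j] show ?thesis
    by (simp add: field_simps)
qed

lemma has_double_powser_coeff_unique:
  assumes "r > 0" "has_double_powser G r H" "has_double_powser G' r H"
  shows "G = G'"
proof
  fix p :: "nat \<times> nat"
  show "G p = G' p"
    using has_double_powser_coeff[OF assms(1,2), of "fst p" "snd p"]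
      has_double_powser_coeff[OF assms(1,3), of "fst p" "snd p"] by simp
qed

lemma has_double_powser_eq_iff:
  assumes "r > 0" "has_double_powser G r H" "has_double_powser G' r H'"
  shows "(\<forall>x y. norm x < r \<longrightarrow> norm y < r \<longrightarrow> H x y = H' x y) \<longleftrightarrow> G = G'"
proof
  assume "\<forall>x y. norm x < r \<longrightarrow> norm y < r \<longrightarrow> H x y = H' x y"
  hence "has_double_powser G' r H"
    using assms(3) by (simp add: has_double_powser_def)
  thus "G = G'"
    using has_double_powser_coeff_unique[OF assms(1,2)] by blast
next
  assume "G = G'"
  with assms(2,3) show "\<forall>x y. norm x < r \<longrightarrow> norm y < r \<longrightarrow> H x y = H' x y"
    unfolding has_double_powser_def by (blast intro: has_sum_unique)
qed

lemma has_double_powser_mono: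
  "has_double_powser G r H \<Longrightarrow> r' \<le> r \<Longrightarrow> has_double_powser G r' H"
  unfolding has_double_powser_def by auto

lemma has_double_powser_cong:
  assumes "has_double_powser G r H" "\<And>p. G p = G' p"
    "\<And>x y. norm x < r \<Longrightarrow> norm y < r \<Longrightarrow> H x y = H' x y"
  shows "has_double_powser G' r H'"
  using assms unfolding has_double_powser_def by (metis ext)

lemma has_double_powser_add:
  assumes "has_double_powser G1 r H1" "has_double_powser G2 r H2"
  shows "has_double_powser (\<lambda>p. G1 p + G2 p) r (\<lambda>x y. H1 x y + H2 x y)"
  using assms has_sum_add
  unfolding has_double_powser_def by (fastforce simp: algebra_simps)

lemma has_double_powser_cmult:
  assumes "has_double_powser G r H"
  shows "has_double_powser (\<lambda>p. c * G p) r (\<lambda>x y. c * H x y)"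
  using assms has_sum_cmult_right[of _ _ _ c]
  unfolding has_double_powser_def by (fastforce simp: algebra_simps)

lemma has_double_powser_diff:
  assumes "has_double_powser G1 r H1" "has_double_powser G2 r H2"
  shows "has_double_powser (\<lambda>p. G1 p - G2 p) r (\<lambda>x y. H1 x y - H2 x y)"
  using has_double_powser_add[OF assms(1) has_double_powser_cmult[OF assms(2), of "-1"]]
  by (rule has_double_powser_cong) auto

lemma has_double_powser_scale:
  assumes "has_double_powser G r H" "norm \<alpha> \<le> 1" "norm \<beta> \<le> 1"
  shows "has_double_powser (\<lambda>p. G p * \<alpha> ^ fst p * \<beta> ^ snd p) r (\<lambda>x y. H (x * \<alpha>) (y * \<beta>))"
  unfolding has_double_powser_def
proof (intro allI impI)
  fix x y :: complex
  assume "norm x < r" "norm y < r"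
  moreover have "norm (x * \<alpha>) \<le> norm x" "norm (y * \<beta>) \<le> norm y"
    using assms(2,3) by (simp_all add: norm_mult mult_left_le)
  ultimately have "((\<lambda>p. G p * (x * \<alpha>) ^ fst p * (y * \<beta>) ^ snd p) has_sum H (x * \<alpha>) (y * \<beta>)) UNIV"
    using assms(1) unfolding has_double_powser_def by force
  thus "((\<lambda>p. G p * \<alpha> ^ fst p * \<beta> ^ snd p * x ^ fst p * y ^ snd p) has_sum H (x * \<alpha>) (y * \<beta>)) UNIV"
    by (simp add: power_mult_distrib algebra_simps)
qed

lemma has_double_powser_dilate:
  assumes "has_double_powser G r F" "norm Q \<le> 1"
  shows "has_double_powser (\<lambda>p. G p * Q ^ (i * fst p) * Q ^ (m * snd p)) r (\<lambda>x y. F (x * Q ^ i) (y * Q ^ m))"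
  using has_double_powser_scale[OF assms(1), where \<alpha> = "Q ^ i" and \<beta> = "Q ^ m"] assms(2)
  by (simp add: power_mult norm_power power_le_one)

lemma has_double_powser_monomial_mult:
  assumes "has_double_powser G r H"
  shows "has_double_powser
           (\<lambda>p. if m \<le> fst p \<and> n \<le> snd p then G (fst p - m, snd p - n) else 0) r
           (\<lambda>x y. x ^ m * y ^ n * H x y)"
  unfolding has_double_powser_def
proof (intro allI impI)
  fix x y :: complex
  assume xy: "norm x < r" "norm y < r"
  define g where "g p = (if m \<le> fst p \<and> n \<le> snd p then G (fst p - m, snd p - n) else 0)
                          * x ^ fst p * y ^ snd p" for p
  define shift where "shift p = (fst p + m, snd p + n)" for p :: "nat \<times> nat"
  have "inj shift"
    unfolding shift_def inj_def by auto
  have "((\<lambda>p. x ^ m * y ^ n * (G p * x ^ fst p * y ^ snd p)) has_sum x ^ m * y ^ n * H x y) UNIV"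
    using assms xy unfolding has_double_powser_def by (intro has_sum_cmult_right) auto
  hence "((g \<circ> shift) has_sum x ^ m * y ^ n * H x y) UNIV"
    by (simp add: g_def shift_def o_def power_add algebra_simps)
  hence "(g has_sum x ^ m * y ^ n * H x y) (range shift)"
    using has_sum_reindex[OF \<open>inj shift\<close>] by blast
  moreover have "range shift = {p. m \<le> fst p \<and> n \<le> snd p}"
    unfolding shift_def by (auto simp: image_iff) (metis le_add_diff_inverse2)+
  ultimately show "(g has_sum x ^ m * y ^ n * H x y) UNIV"
    by (subst (asm) has_sum_cong_neutral[of UNIV _ g]) (auto simp: g_def)
qed

lemma has_double_powser_sums_at_y0:
  assumes "has_double_powser G r H" "norm x < r"
  shows "(\<lambda>n. G (n, 0) * x ^ n) sums H x 0"
proof -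
  let ?g = "\<lambda>p. G p * x ^ fst p * 0 ^ snd p"
  have "0 < r"
    using assms(2) norm_ge_zero[of x] by linarith
  hence "(?g has_sum H x 0) UNIV"
    using assms unfolding has_double_powser_def by simp
  hence "(?g has_sum H x 0) (range (\<lambda>n. (n, 0)))"
    by (subst has_sum_cong_neutral[of UNIV _ ?g]) (auto simp: image_iff)
  hence "((\<lambda>n. G (n, 0) * x ^ n) has_sum H x 0) UNIV"
    by (subst (asm) has_sum_reindex) (auto simp: inj_def o_def)
  thus ?thesis
    by (rule has_sum_imp_sums)
qed

abbreviation in_polydisc5 :: "real \<Rightarrow> complex \<Rightarrow> complex \<Rightarrow> complex \<Rightarrow> complex \<Rightarrow> complex \<Rightarrow> bool" where
  "in_polydisc5 r a b c d e \<equiv> norm a < r \<and> norm b < r \<and> norm c < r \<and> norm d < r \<and> norm e < r"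

lemma has_double_powser_of_sum7:
  fixes C :: "nat \<times> nat \<times> nat \<times> nat \<times> nat \<times> nat \<times> nat \<Rightarrow> complex"
  assumes "\<And>x y. norm x < r \<Longrightarrow> norm y < r \<Longrightarrow>
             ((\<lambda>(i1, i2, i3, i4, i5, i6, i7). C (i1, i2, i3, i4, i5, i6, i7)
                 * a ^ i1 * b ^ i2 * c ^ i3 * d ^ i4 * e ^ i5 * x ^ i6 * y ^ i7) has_sum F x y) UNIV"
  shows "has_double_powser
           (\<lambda>p. \<Sum>\<^sub>\<infinity>(i1, i2, i3, i4, i5). C (i1, i2, i3, i4, i5, fst p, snd p)
                   * a ^ i1 * b ^ i2 * c ^ i3 * d ^ i4 * e ^ i5) r F"
  unfolding has_double_powser_def
proof (intro allI impI)
  fix x y :: complex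
  assume "norm x < r" "norm y < r"
  define P where "P p = (\<lambda>(i1, i2, i3, i4, i5). C (i1, i2, i3, i4, i5, fst p, snd p)
                          * a ^ i1 * b ^ i2 * c ^ i3 * d ^ i4 * e ^ i5)" for p :: "nat \<times> nat"
  have "((\<lambda>(p, i). P p i * (x ^ fst p * y ^ snd p)) has_sum F x y) UNIV
    \<longleftrightarrow> ((\<lambda>(i1, i2, i3, i4, i5, i6, i7). C (i1, i2, i3, i4, i5, i6, i7)
                 * a ^ i1 * b ^ i2 * c ^ i3 * d ^ i4 * e ^ i5 * x ^ i6 * y ^ i7) has_sum F x y) UNIV"
    by (rule has_sum_reindex_bij_witness[where
          i = "\<lambda>(i1, i2, i3, i4, i5, i6, i7). ((i6, i7), (i1, i2, i3, i4, i5))" and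
          j = "\<lambda>((i6, i7), (i1, i2, i3, i4, i5)). (i1, i2, i3, i4, i5, i6, i7)"])
       (auto simp: P_def split: prod.splits)
  hence "((\<lambda>(p, i). P p i * (x ^ fst p * y ^ snd p)) has_sum F x y) UNIV"
    using assms[OF \<open>norm x < r\<close> \<open>norm y < r\<close>] by blast
  from has_sum_infsum_rows(2)[OF this]
  show "((\<lambda>p. (\<Sum>\<^sub>\<infinity>i. P p i) * x ^ fst p * y ^ snd p) has_sum F x y) UNIV"
    by (simp add: infsum_cmult_left' mult.assoc)
qed

lemma has_double_powser_xy_coeff:
  assumes "r > 0" "has_double_powser G r (f a b c d e)"
  shows "has_double_powser (case_prod (xy_coeff f a b c d e)) r (f a b c d e)"
proof (rule has_double_powser_cong[OF assms(2)])
  fix p :: "nat \<times> nat"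
  show "G p = case_prod (xy_coeff f a b c d e) p"
    using has_double_powser_coeff[OF assms, of "fst p" "snd p"] by (simp add: xy_coeff_def case_prod_beta)
qed simp

lemma analytic_near0_7_has_double_powser:
  assumes "analytic_near0_7 f"
  obtains r where "r > 0"
    and "\<forall>a b c d e. in_polydisc5 r a b c d e \<longrightarrow>
           has_double_powser (case_prod (xy_coeff f a b c d e)) r (f a b c d e)"
proof -
  obtain r C where "r > 0" and C: "\<forall>a b c d e x y. norm a < r \<and> norm b < r \<and> norm c < r \<and> norm d < r
      \<and> norm e < r \<and> norm x < r \<and> norm y < r \<longrightarrow>
          ((\<lambda>(i1, i2, i3, i4, i5, i6, i7). C (i1, i2, i3, i4, i5, i6, i7)
             * a ^ i1 * b ^ i2 * c ^ i3 * d ^ i4 * e ^ i5 * x ^ i6 * y ^ i7) has_sum f a b c d e x y) UNIV"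
    using assms unfolding analytic_near0_7_def by blast
  have "\<forall>a b c d e. in_polydisc5 r a b c d e \<longrightarrow>
          has_double_powser (case_prod (xy_coeff f a b c d e)) r (f a b c d e)"
  proof (intro allI impI)
    fix a b c d e :: complex
    assume disc: "in_polydisc5 r a b c d e"
    show "has_double_powser (case_prod (xy_coeff f a b c d e)) r (f a b c d e)"
      by (rule has_double_powser_xy_coeff[OF \<open>r > 0\<close>
            has_double_powser_of_sum7[where C = C and a = a and b = b and c = c and d = d and e = e]])
         (use C disc in auto)
  qed
  with \<open>r > 0\<close> show ?thesis
    using that by blast
qed

lemma qpoch_0 [simp]: "qpoch \<alpha> q 0 = 1"
  by (simp add: qpoch_def)

lemma qpoch_Suc: "qpoch \<alpha> q (Suc n) = qpoch \<alpha> q n * (1 - \<alpha> * of_real q ^ n)"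
  unfolding qpoch_def by (rule prod.lessThan_Suc)

lemma one_minus_mult_power_nonzero:
  fixes \<alpha> :: complex
  assumes "norm \<alpha> < 1" "\<bar>q\<bar> \<le> 1"
  shows "1 - \<alpha> * of_real q ^ n \<noteq> 0"
proof
  assume "1 - \<alpha> * of_real q ^ n = 0"
  hence "norm (\<alpha> * of_real q ^ n) = 1"
    by (metis eq_iff_diff_eq_0 norm_one)
  moreover have "norm (\<alpha> * of_real q ^ n) \<le> norm \<alpha>"
    using assms by (simp add: norm_mult norm_power mult_left_le power_le_one)
  ultimately show False
    using assms(1) by simp
qed

lemma qpoch_nonzero:
  assumes "norm \<alpha> < 1" "\<bar>q\<bar> \<le> 1"
  shows "qpoch \<alpha> q n \<noteq> 0"
  using one_minus_mult_power_nonzero[OF assms] by (simp add: qpoch_def)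

lemma qbinom_Suc_right:
  assumes "\<bar>q\<bar> < 1"
  defines "Q \<equiv> complex_of_real q"
  shows "qbinom q (Suc (j + k)) (Suc k) * (1 - Q ^ Suc k) = qbinom q (Suc (j + k)) k * (1 - Q ^ Suc j)"
proof -
  define N where "N = qpoch Q q (Suc (j + k))"
  have "norm Q < 1" "\<bar>q\<bar> \<le> 1"
    using assms by simp_all
  hence "1 - Q ^ Suc k \<noteq> 0" "1 - Q ^ Suc j \<noteq> 0"
    using one_minus_mult_power_nonzero by (simp_all add: Q_def)
  moreover have "Suc (j + k) - Suc k = j" "Suc (j + k) - k = Suc j"
    by simp_all
  hence "qbinom q (Suc (j + k)) (Suc k) = N / (qpoch Q q k * (1 - Q ^ Suc k) * qpoch Q q j)"
        "qbinom q (Suc (j + k)) k = N / (qpoch Q q k * (qpoch Q q j * (1 - Q ^ Suc j)))"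
    by (simp_all add: qbinom_def qpoch_Suc N_def Q_def)
  ultimately show ?thesis
    by (simp add: mult.assoc)
qed

lemma phi_coeff_Suc_right:
  assumes "\<bar>q\<bar> < 1" "norm d < 1" "norm e < 1"
  defines "Q \<equiv> complex_of_real q"
  shows "phi_coeff q a b c d e (Suc (j + k)) (Suc k) * ((1 - d * Q ^ k) * (1 - e * Q ^ k)) * (1 - Q ^ Suc k)
       = phi_coeff q a b c d e (Suc (j + k)) k * ((1 - a * Q ^ k) * (1 - b * Q ^ k) * (1 - c * Q ^ k))
           * (1 - Q ^ Suc j)"
proof -
  define P where "P = qpoch a q k * qpoch b q k * qpoch c q k"
  define D where "D = qpoch d q k * qpoch e q k"
  define X where "X = (1 - a * Q ^ k) * (1 - b * Q ^ k) * (1 - c * Q ^ k)"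
  define Y where "Y = (1 - d * Q ^ k) * (1 - e * Q ^ k)"
  have "\<bar>q\<bar> \<le> 1"
    using assms(1) by simp
  hence "D \<noteq> 0" "Y \<noteq> 0"
    using assms(2,3) qpoch_nonzero one_minus_mult_power_nonzero[of _ q k]
    unfolding D_def Y_def Q_def by simp_all
  have "qpoch a q (Suc k) * qpoch b q (Suc k) * qpoch c q (Suc k) = P * X"
       "qpoch d q (Suc k) * qpoch e q (Suc k) = D * Y"
    by (simp_all add: qpoch_Suc P_def X_def D_def Y_def Q_def mult_ac)
  hence "phi_coeff q a b c d e (Suc (j + k)) (Suc k) = qbinom q (Suc (j + k)) (Suc k) * (P * X) / (D * Y)"
    unfolding phi_coeff_def by simp
  hence "phi_coeff q a b c d e (Suc (j + k)) (Suc k) * Y * (1 - Q ^ Suc k)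
      = qbinom q (Suc (j + k)) (Suc k) * (1 - Q ^ Suc k) * (P * X) / D"
    using \<open>Y \<noteq> 0\<close> by simp
  also have "\<dots> = qbinom q (Suc (j + k)) k * (1 - Q ^ Suc j) * (P * X) / D"
    using qbinom_Suc_right[OF assms(1)] by (simp only: Q_def)
  also have "\<dots> = phi_coeff q a b c d e (Suc (j + k)) k * X * (1 - Q ^ Suc j)"
    unfolding phi_coeff_def P_def D_def by simp
  finally show ?thesis
    unfolding X_def Y_def .
qed

lemma phi_coeff_0 [simp]:
  assumes "\<bar>q\<bar> < 1"
  shows "phi_coeff q a b c d e n 0 = 1"
  using assms qpoch_nonzero[of "of_real q" q n] by (simp add: phi_coeff_def qbinom_def)

definition qdiff_lhs ::
    "complex \<Rightarrow> (complex \<Rightarrow> complex \<Rightarrow> complex) \<Rightarrow> complex \<Rightarrow> complex \<Rightarrow> complex \<Rightarrow> complex \<Rightarrow> complex" where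
  "qdiff_lhs Q F d e x y =
     F x y - F x (y * Q) - (d + e) / Q * (F x (y * Q) - F x (y * Q ^ 2))
       + d * e / Q ^ 2 * (F x (y * Q ^ 2) - F x (y * Q ^ 3))"

definition qdiff_rhs ::
    "complex \<Rightarrow> (complex \<Rightarrow> complex \<Rightarrow> complex) \<Rightarrow> complex \<Rightarrow> complex \<Rightarrow> complex \<Rightarrow> complex \<Rightarrow> complex \<Rightarrow> complex" where
  "qdiff_rhs Q F a b c x y =
     (F x y - F (x * Q) y) - (a + b + c) * (F x (y * Q) - F (x * Q) (y * Q))
       + (a * b + a * c + b * c) * (F x (y * Q ^ 2) - F (x * Q) (y * Q ^ 2))
       - a * b * c * (F x (y * Q ^ 3) - F (x * Q) (y * Q ^ 3))"

definition lhs_multiplier :: "complex \<Rightarrow> complex \<Rightarrow> complex \<Rightarrow> nat \<Rightarrow> complex" where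
  "lhs_multiplier Q d e k =
     1 - Q ^ k - (d + e) / Q * (Q ^ k - Q ^ (2 * k)) + d * e / Q ^ 2 * (Q ^ (2 * k) - Q ^ (3 * k))"

definition rhs_multiplier :: "complex \<Rightarrow> complex \<Rightarrow> complex \<Rightarrow> complex \<Rightarrow> nat \<Rightarrow> nat \<Rightarrow> complex" where
  "rhs_multiplier Q a b c j k =
     (1 - Q ^ j) - (a + b + c) * (Q ^ k - Q ^ j * Q ^ k)
       + (a * b + a * c + b * c) * (Q ^ (2 * k) - Q ^ j * Q ^ (2 * k))
       - a * b * c * (Q ^ (3 * k) - Q ^ j * Q ^ (3 * k))"

lemma lhs_multiplier_0 [simp]: "lhs_multiplier Q d e 0 = 0"
  by (simp add: lhs_multiplier_def)

lemma rhs_multiplier_0 [simp]: "rhs_multiplier Q a b c 0 k = 0"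
  by (simp add: rhs_multiplier_def)

lemma power_mult_left: "(x :: 'a :: monoid_mult) ^ (m * n) = (x ^ n) ^ m"
  by (metis power_mult mult.commute)

lemma lhs_multiplier_Suc:
  assumes "Q \<noteq> 0"
  shows "lhs_multiplier Q d e (Suc k) = (1 - Q ^ Suc k) * (1 - d * Q ^ k) * (1 - e * Q ^ k)"
proof -
  define t where "t = Q ^ k"
  have "Q * t - (Q * t) ^ 2 = Q * (t - Q * t ^ 2)" "(Q * t) ^ 2 - (Q * t) ^ 3 = Q ^ 2 * (t ^ 2 - Q * t ^ 3)"
    by (simp_all add: algebra_simps power2_eq_square power3_eq_cube)
  hence "lhs_multiplier Q d e (Suc k) = 1 - Q * t - (d + e) * (t - Q * t ^ 2) + d * e * (t ^ 2 - Q * t ^ 3)"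
    using assms unfolding lhs_multiplier_def power_mult_left power_Suc t_def[symmetric] by simp
  also have "\<dots> = (1 - Q * t) * (1 - d * t) * (1 - e * t)"
    by (simp add: algebra_simps power2_eq_square power3_eq_cube)
  finally show ?thesis
    by (simp add: t_def)
qed

lemma rhs_multiplier_eq:
  "rhs_multiplier Q a b c j k = (1 - Q ^ j) * (1 - a * Q ^ k) * (1 - b * Q ^ k) * (1 - c * Q ^ k)"
  unfolding rhs_multiplier_def power_mult_left
  by (simp add: algebra_simps power2_eq_square power3_eq_cube)

lemma phi_coeff_recurrence:
  assumes "0 < q" "q < 1" "norm d < 1" "norm e < 1"
  defines "Q \<equiv> complex_of_real q"
  shows "phi_coeff q a b c d e (Suc (j + k)) (Suc k) * lhs_multiplier Q d e (Suc k)
       = phi_coeff q a b c d e (Suc (j + k)) k * rhs_multiplier Q a b c (Suc j) k"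
proof -
  have "Q \<noteq> 0" "\<bar>q\<bar> < 1"
    using assms by (simp_all add: Q_def)
  with phi_coeff_Suc_right[of q d e a b c j k] assms(3,4) show ?thesis
    by (simp add: lhs_multiplier_Suc rhs_multiplier_eq Q_def mult_ac)
qed

lemma shifted_coeffs_eq_iff_recurrence:
  fixes G :: "nat \<times> nat \<Rightarrow> 'a :: mult_zero"
  assumes "L 0 = 0" "\<And>k. M 0 k = 0"
  shows "(\<lambda>p. if 0 < fst p then G (fst p - 1, snd p) * L (snd p) else 0)
           = (\<lambda>p. if 0 < snd p then G (fst p, snd p - 1) * M (fst p) (snd p - 1) else 0)
         \<longleftrightarrow> (\<forall>j k. G (j, Suc k) * L (Suc k) = G (Suc j, k) * M (Suc j) k)"
proof
  assume "(\<lambda>p. if 0 < fst p then G (fst p - 1, snd p) * L (snd p) else 0)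
           = (\<lambda>p. if 0 < snd p then G (fst p, snd p - 1) * M (fst p) (snd p - 1) else 0)"
  from fun_cong[OF this, of "(Suc j, Suc k)" for j k]
  show "\<forall>j k. G (j, Suc k) * L (Suc k) = G (Suc j, k) * M (Suc j) k"
    by simp
next
  assume rec: "\<forall>j k. G (j, Suc k) * L (Suc k) = G (Suc j, k) * M (Suc j) k"
  show "(\<lambda>p. if 0 < fst p then G (fst p - 1, snd p) * L (snd p) else 0)
           = (\<lambda>p. if 0 < snd p then G (fst p, snd p - 1) * M (fst p) (snd p - 1) else 0)"
  proof
    fix p :: "nat \<times> nat"
    obtain j k where p: "p = (j, k)"
      by fastforce
    show "(if 0 < fst p then G (fst p - 1, snd p) * L (snd p) else 0)
           = (if 0 < snd p then G (fst p, snd p - 1) * M (fst p) (snd p - 1) else 0)"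
      using rec assms unfolding p by (cases j; cases k) auto
  qed
qed

definition qdiff_coeff_recurrence ::
    "real \<Rightarrow> complex \<Rightarrow> complex \<Rightarrow> complex \<Rightarrow> complex \<Rightarrow> complex \<Rightarrow> (nat \<times> nat \<Rightarrow> complex) \<Rightarrow> bool" where
  "qdiff_coeff_recurrence q a b c d e G \<longleftrightarrow>
     (\<forall>j k. G (j, Suc k) * lhs_multiplier (of_real q) d e (Suc k)
              = G (Suc j, k) * rhs_multiplier (of_real q) a b c (Suc j) k)"

lemma qdiff_coeff_recurrence_iff_phi_coeff:
  assumes q: "0 < q" "q < 1" and de: "norm d < 1" "norm e < 1"
  shows "qdiff_coeff_recurrence q a b c d e G
           \<longleftrightarrow> (\<forall>j k. G (j, k) = G (j + k, 0) * phi_coeff q a b c d e (j + k) k)"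
proof
  define Q where "Q = complex_of_real q"
  assume rec: "qdiff_coeff_recurrence q a b c d e G"
  have "lhs_multiplier Q d e (Suc k) \<noteq> 0" for k
    using q de one_minus_mult_power_nonzero[of Q q k] one_minus_mult_power_nonzero[of d q k]
      one_minus_mult_power_nonzero[of e q k]
    by (simp add: lhs_multiplier_Suc Q_def)
  show "\<forall>j k. G (j, k) = G (j + k, 0) * phi_coeff q a b c d e (j + k) k"
  proof (intro allI)
    fix j k
    show "G (j, k) = G (j + k, 0) * phi_coeff q a b c d e (j + k) k"
    proof (induction k arbitrary: j)
      case 0
      show ?case
        using q by simp
    next
      case (Suc k)
      have "G (j, Suc k) * lhs_multiplier Q d e (Suc k) = G (Suc j, k) * rhs_multiplier Q a b c (Suc j) k"
        using rec by (simp add: qdiff_coeff_recurrence_def Q_def)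
      also have "\<dots> = G (Suc (j + k), 0) * (phi_coeff q a b c d e (Suc (j + k)) k * rhs_multiplier Q a b c (Suc j) k)"
        using Suc.IH[of "Suc j"] by simp
      also have "\<dots> = G (Suc (j + k), 0) * phi_coeff q a b c d e (Suc (j + k)) (Suc k) * lhs_multiplier Q d e (Suc k)"
        using phi_coeff_recurrence[OF q de] by (simp add: Q_def)
      finally show ?case
        using \<open>lhs_multiplier Q d e (Suc k) \<noteq> 0\<close> by simp
    qed
  qed
next
  assume phi: "\<forall>j k. G (j, k) = G (j + k, 0) * phi_coeff q a b c d e (j + k) k"
  have "G (j, Suc k) * lhs_multiplier (of_real q) d e (Suc k)
          = G (Suc j, k) * rhs_multiplier (of_real q) a b c (Suc j) k" for j k
    using phi[rule_format, of j "Suc k"] phi[rule_format, of "Suc j" k] phi_coeff_recurrence[OF q de, of a b c j k]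
    by (simp add: mult.assoc)
  thus "qdiff_coeff_recurrence q a b c d e G"
    by (simp add: qdiff_coeff_recurrence_def)
qed

lemma qdiff_eq_iff:
  "qdiff_eq q f a b c d e x y \<longleftrightarrow>
     x * qdiff_lhs (of_real q) (f a b c d e) d e x y = y * qdiff_rhs (of_real q) (f a b c d e) a b c x y"
  unfolding qdiff_eq_def qdiff_lhs_def qdiff_rhs_def Let_def ..

lemma has_double_powser_qdiff_lhs:
  assumes "has_double_powser G r F" "norm Q \<le> 1"
  shows "has_double_powser (\<lambda>p. G p * lhs_multiplier Q d e (snd p)) r (qdiff_lhs Q F d e)"
proof -
  note F = has_double_powser_dilate[OF assms, where i = 0]
  have "has_double_powser
          (\<lambda>p. G p * Q ^ (0 * fst p) * Q ^ (0 * snd p) - G p * Q ^ (0 * fst p) * Q ^ (1 * snd p)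
                - (d + e) / Q * (G p * Q ^ (0 * fst p) * Q ^ (1 * snd p) - G p * Q ^ (0 * fst p) * Q ^ (2 * snd p))
                + d * e / Q ^ 2 * (G p * Q ^ (0 * fst p) * Q ^ (2 * snd p) - G p * Q ^ (0 * fst p) * Q ^ (3 * snd p))) r
          (\<lambda>x y. F (x * Q ^ 0) (y * Q ^ 0) - F (x * Q ^ 0) (y * Q ^ 1)
                - (d + e) / Q * (F (x * Q ^ 0) (y * Q ^ 1) - F (x * Q ^ 0) (y * Q ^ 2))
                + d * e / Q ^ 2 * (F (x * Q ^ 0) (y * Q ^ 2) - F (x * Q ^ 0) (y * Q ^ 3)))"
    by (intro has_double_powser_add has_double_powser_diff has_double_powser_cmult F)
  thus ?thesis
    by (rule has_double_powser_cong) (simp_all add: lhs_multiplier_def qdiff_lhs_def algebra_simps)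
qed

lemma has_double_powser_qdiff_rhs:
  assumes "has_double_powser G r F" "norm Q \<le> 1"
  shows "has_double_powser (\<lambda>p. G p * rhs_multiplier Q a b c (fst p) (snd p)) r (qdiff_rhs Q F a b c)"
proof -
  note F = has_double_powser_dilate[OF assms]
  have "has_double_powser
          (\<lambda>p. (G p * Q ^ (0 * fst p) * Q ^ (0 * snd p) - G p * Q ^ (1 * fst p) * Q ^ (0 * snd p))
                - (a + b + c) * (G p * Q ^ (0 * fst p) * Q ^ (1 * snd p) - G p * Q ^ (1 * fst p) * Q ^ (1 * snd p))
                + (a * b + a * c + b * c) * (G p * Q ^ (0 * fst p) * Q ^ (2 * snd p) - G p * Q ^ (1 * fst p) * Q ^ (2 * snd p))
                - a * b * c * (G p * Q ^ (0 * fst p) * Q ^ (3 * snd p) - G p * Q ^ (1 * fst p) * Q ^ (3 * snd p))) r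
          (\<lambda>x y. (F (x * Q ^ 0) (y * Q ^ 0) - F (x * Q ^ 1) (y * Q ^ 0))
                - (a + b + c) * (F (x * Q ^ 0) (y * Q ^ 1) - F (x * Q ^ 1) (y * Q ^ 1))
                + (a * b + a * c + b * c) * (F (x * Q ^ 0) (y * Q ^ 2) - F (x * Q ^ 1) (y * Q ^ 2))
                - a * b * c * (F (x * Q ^ 0) (y * Q ^ 3) - F (x * Q ^ 1) (y * Q ^ 3)))"
    by (intro has_double_powser_add has_double_powser_diff has_double_powser_cmult F)
  thus ?thesis
    by (rule has_double_powser_cong) (simp_all add: rhs_multiplier_def qdiff_rhs_def algebra_simps)
qed

lemma qdiff_eq_on_polydisc_iff_recurrence:
  assumes q: "0 < q" "q < 1" and r: "r > 0" and F: "has_double_powser G r (f a b c d e)"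
  shows "(\<forall>x y. norm x < r \<longrightarrow> norm y < r \<longrightarrow> qdiff_eq q f a b c d e x y)
           \<longleftrightarrow> qdiff_coeff_recurrence q a b c d e G"
proof -
  define Q where "Q = complex_of_real q"
  have "norm Q \<le> 1"
    using q by (simp add: Q_def)
  have "has_double_powser (\<lambda>p. if 0 < fst p then G (fst p - 1, snd p) * lhs_multiplier Q d e (snd p) else 0) r
          (\<lambda>x y. x * qdiff_lhs Q (f a b c d e) d e x y)"
    using has_double_powser_monomial_mult[OF has_double_powser_qdiff_lhs[OF F \<open>norm Q \<le> 1\<close>], of 1 0]
    by (rule has_double_powser_cong) auto
  moreover have "has_double_powser (\<lambda>p. if 0 < snd p then G (fst p, snd p - 1) * rhs_multiplier Q a b c (fst p) (snd p - 1) else 0) r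
          (\<lambda>x y. y * qdiff_rhs Q (f a b c d e) a b c x y)"
    using has_double_powser_monomial_mult[OF has_double_powser_qdiff_rhs[OF F \<open>norm Q \<le> 1\<close>], of 0 1]
    by (rule has_double_powser_cong) auto
  ultimately have "(\<forall>x y. norm x < r \<longrightarrow> norm y < r \<longrightarrow>
                      x * qdiff_lhs Q (f a b c d e) d e x y = y * qdiff_rhs Q (f a b c d e) a b c x y)
    \<longleftrightarrow> (\<lambda>p. if 0 < fst p then G (fst p - 1, snd p) * lhs_multiplier Q d e (snd p) else 0)
          = (\<lambda>p. if 0 < snd p then G (fst p, snd p - 1) * rhs_multiplier Q a b c (fst p) (snd p - 1) else 0)"
    by (rule has_double_powser_eq_iff[OF r])
  also have "\<dots> \<longleftrightarrow> qdiff_coeff_recurrence q a b c d e G"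
    unfolding qdiff_coeff_recurrence_def Q_def by (rule shifted_coeffs_eq_iff_recurrence) simp_all
  finally show ?thesis
    unfolding qdiff_eq_iff Q_def .
qed

lemma qdiff_eq_iff_phi_expansion:
  assumes q: "0 < q" "q < 1" and de: "norm d < 1" "norm e < 1" and "r > 0"
    and "has_double_powser (case_prod (xy_coeff f a b c d e)) r (f a b c d e)"
  shows "(\<forall>x y. norm x < r \<longrightarrow> norm y < r \<longrightarrow> qdiff_eq q f a b c d e x y)
           \<longleftrightarrow> (\<forall>j k. xy_coeff f a b c d e j k
                       = xy_coeff f a b c d e (j + k) 0 * phi_coeff q a b c d e (j + k) k)"
  using qdiff_eq_on_polydisc_iff_recurrence[where f = f and a = a and b = b and c = c and d = d and e = e,
      OF q assms(5,6)]
    qdiff_coeff_recurrence_iff_phi_coeff[OF q de] by simp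

lemma phi_expansion_unique:
  assumes "\<bar>q\<bar> < 1" "\<forall>j k. G j k = \<mu> (j + k) * phi_coeff q a b c d e (j + k) k"
  shows "\<mu> n = G n 0"
  using assms(2)[rule_format, of n 0] assms(1) by simp

lemma phi_expansion_canonical:
  assumes "\<bar>q\<bar> < 1" "\<forall>j k. G j k = \<mu> (j + k) * phi_coeff q a b c d e (j + k) k"
  shows "\<forall>j k. G j k = G (j + k) 0 * phi_coeff q a b c d e (j + k) k"
  unfolding phi_expansion_unique[OF assms, symmetric] by (rule assms(2))

context
  fixes q :: real and f :: fun7 and R :: real
  assumes q: "0 < q" "q < 1" and R: "R > 0"
    and D: "\<forall>a b c d e. in_polydisc5 R a b c d e \<longrightarrow>
              has_double_powser (case_prod (xy_coeff f a b c d e)) R (f a b c d e)"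
begin

text \<open>The bound \<open>r \<le> 1\<close> keeps \<open>|d|, |e| < 1\<close>, so that no factor \<open>1 - d q^k\<close>, \<open>1 - e q^k\<close> of
  the recurrence vanishes.\<close>

lemma qdiff_on_polydisc_iff_phi_expansion:
  assumes "0 < r" "r \<le> min R 1" "in_polydisc5 r a b c d e"
  shows "(\<forall>x y. norm x < r \<longrightarrow> norm y < r \<longrightarrow> qdiff_eq q f a b c d e x y)
           \<longleftrightarrow> (\<forall>j k. xy_coeff f a b c d e j k
                       = xy_coeff f a b c d e (j + k) 0 * phi_coeff q a b c d e (j + k) k)"
proof -
  have "in_polydisc5 R a b c d e" "r \<le> R" "norm d < 1" "norm e < 1"
    using assms by auto
  with has_double_powser_mono[OF D[rule_format]] show ?thesis
    by (intro qdiff_eq_iff_phi_expansion[OF q _ _ assms(1)])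
qed

lemma qdiff_near0_iff_phi_expansion_near0:
  "(\<exists>r>0. \<forall>a b c d e x y. in_polydisc5 r a b c d e \<and> norm x < r \<and> norm y < r \<longrightarrow> qdiff_eq q f a b c d e x y)
     \<longleftrightarrow> (\<exists>\<mu>. \<exists>\<rho>>0. \<forall>a b c d e. in_polydisc5 \<rho> a b c d e \<longrightarrow>
            (\<forall>j k. xy_coeff f a b c d e j k = \<mu> (j + k) a b c d e * phi_coeff q a b c d e (j + k) k))"
proof
  assume "\<exists>r>0. \<forall>a b c d e x y. in_polydisc5 r a b c d e \<and> norm x < r \<and> norm y < r \<longrightarrow> qdiff_eq q f a b c d e x y"
  then obtain r where "r > 0" and qdiff: "\<forall>a b c d e x y. in_polydisc5 r a b c d e \<and> norm x < r \<and> norm y < r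
                                            \<longrightarrow> qdiff_eq q f a b c d e x y"
    by blast
  define \<rho> where "\<rho> = min r (min R 1)"
  have "\<rho> > 0" "\<rho> \<le> min R 1"
    using \<open>r > 0\<close> R by (auto simp: \<rho>_def min_def)
  have "\<forall>j k. xy_coeff f a b c d e j k = xy_coeff f a b c d e (j + k) 0 * phi_coeff q a b c d e (j + k) k"
    if "in_polydisc5 \<rho> a b c d e" for a b c d e
  proof -
    have "\<forall>x y. norm x < \<rho> \<longrightarrow> norm y < \<rho> \<longrightarrow> qdiff_eq q f a b c d e x y"
      using that by (auto simp: \<rho>_def intro!: qdiff[rule_format])
    with qdiff_on_polydisc_iff_phi_expansion[OF \<open>\<rho> > 0\<close> \<open>\<rho> \<le> min R 1\<close> that] show ?thesis
      by blast
  qed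
  with \<open>\<rho> > 0\<close> show "\<exists>\<mu>. \<exists>\<rho>>0. \<forall>a b c d e. in_polydisc5 \<rho> a b c d e \<longrightarrow>
            (\<forall>j k. xy_coeff f a b c d e j k = \<mu> (j + k) a b c d e * phi_coeff q a b c d e (j + k) k)"
    by (intro exI[of _ "\<lambda>n a b c d e. xy_coeff f a b c d e n 0"] exI[of _ \<rho>]) blast
next
  assume "\<exists>\<mu>. \<exists>\<rho>>0. \<forall>a b c d e. in_polydisc5 \<rho> a b c d e \<longrightarrow>
            (\<forall>j k. xy_coeff f a b c d e j k = \<mu> (j + k) a b c d e * phi_coeff q a b c d e (j + k) k)"
  then obtain \<mu> \<rho> where "\<rho> > 0" and expansion: "\<forall>a b c d e. in_polydisc5 \<rho> a b c d e \<longrightarrow>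
            (\<forall>j k. xy_coeff f a b c d e j k = \<mu> (j + k) a b c d e * phi_coeff q a b c d e (j + k) k)"
    by blast
  define r where "r = min \<rho> (min R 1)"
  have "r > 0" "r \<le> min R 1"
    using \<open>\<rho> > 0\<close> R by (auto simp: r_def min_def)
  have "qdiff_eq q f a b c d e x y"
    if "in_polydisc5 r a b c d e" "norm x < r" "norm y < r" for a b c d e x y
  proof -
    have "\<forall>j k. xy_coeff f a b c d e j k = \<mu> (j + k) a b c d e * phi_coeff q a b c d e (j + k) k"
      using expansion that by (simp add: r_def)
    with q have "\<forall>j k. xy_coeff f a b c d e j k
                       = xy_coeff f a b c d e (j + k) 0 * phi_coeff q a b c d e (j + k) k"
      by (intro phi_expansion_canonical[where \<mu> = "\<lambda>n. \<mu> n a b c d e"]) auto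
    with qdiff_on_polydisc_iff_phi_expansion[OF \<open>r > 0\<close> \<open>r \<le> min R 1\<close> that(1)] show ?thesis
      using that(2,3) by blast
  qed
  with \<open>r > 0\<close> show "\<exists>r>0. \<forall>a b c d e x y. in_polydisc5 r a b c d e \<and> norm x < r \<and> norm y < r
                          \<longrightarrow> qdiff_eq q f a b c d e x y"
    by (auto intro!: exI[of _ r])
qed

lemma phi_expansion_sums_at_y0:
  assumes "\<rho> > 0" "\<forall>a b c d e. in_polydisc5 \<rho> a b c d e \<longrightarrow>
            (\<forall>j k. xy_coeff f a b c d e j k = \<mu> (j + k) a b c d e * phi_coeff q a b c d e (j + k) k)"
  shows "\<exists>\<rho>'>0. \<forall>a b c d e. in_polydisc5 \<rho>' a b c d e \<longrightarrow>
           (\<exists>s>0. \<forall>x. norm x < s \<longrightarrow> (\<lambda>n. \<mu> n a b c d e * x ^ n) sums f a b c d e x 0)"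
proof (rule exI[of _ "min \<rho> R"], intro conjI allI impI)
  fix a b c d e :: complex
  assume disc: "in_polydisc5 (min \<rho> R) a b c d e"
  hence \<mu>: "\<mu> n a b c d e = xy_coeff f a b c d e n 0" for n
    using assms(2) q by (intro phi_expansion_unique[where \<mu> = "\<lambda>n. \<mu> n a b c d e"]) auto
  have "has_double_powser (case_prod (xy_coeff f a b c d e)) R (f a b c d e)"
    using D disc by simp
  from has_double_powser_sums_at_y0[OF this]
  have "(\<lambda>n. \<mu> n a b c d e * x ^ n) sums f a b c d e x 0" if "norm x < R" for x
    using that by (simp add: \<mu>)
  with R show "\<exists>s>0. \<forall>x. norm x < s \<longrightarrow> (\<lambda>n. \<mu> n a b c d e * x ^ n) sums f a b c d e x 0"
    by blast
qed (use assms(1) R in simp)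

end

theorem theorem1:
  fixes q :: real and f :: fun7
  assumes q: "0 < q" "q < 1"
    and an: "analytic_near0_7 f"
  shows "((\<exists>r>0. \<forall>a b c d e x y. norm a < r \<and> norm b < r \<and> norm c < r \<and> norm d < r
              \<and> norm e < r \<and> norm x < r \<and> norm y < r \<longrightarrow> qdiff_eq q f a b c d e x y)
          \<longleftrightarrow>
          (\<exists>\<mu> :: nat \<Rightarrow> complex \<Rightarrow> complex \<Rightarrow> complex \<Rightarrow> complex \<Rightarrow> complex \<Rightarrow> complex.
             \<exists>\<rho>>0. \<forall>a b c d e. norm a < \<rho> \<and> norm b < \<rho> \<and> norm c < \<rho> \<and> norm d < \<rho>
                \<and> norm e < \<rho> \<longrightarrow>
               (\<forall>j k. xy_coeff f a b c d e j k = \<mu> (j + k) a b c d e * phi_coeff q a b c d e (j + k) k)))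
       \<and> (\<forall>\<mu> :: nat \<Rightarrow> complex \<Rightarrow> complex \<Rightarrow> complex \<Rightarrow> complex \<Rightarrow> complex \<Rightarrow> complex. \<forall>\<rho>>0.
            (\<forall>a b c d e. norm a < \<rho> \<and> norm b < \<rho> \<and> norm c < \<rho> \<and> norm d < \<rho> \<and> norm e < \<rho> \<longrightarrow>
               (\<forall>j k. xy_coeff f a b c d e j k = \<mu> (j + k) a b c d e * phi_coeff q a b c d e (j + k) k))
            \<longrightarrow> (\<exists>\<rho>'>0. \<forall>a b c d e. norm a < \<rho>' \<and> norm b < \<rho>' \<and> norm c < \<rho>' \<and> norm d < \<rho>' \<and> norm e < \<rho>' \<longrightarrow>
               (\<exists>s>0. \<forall>x. norm x < s \<longrightarrow> (\<lambda>n. \<mu> n a b c d e * x ^ n) sums f a b c d e x 0)))"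
proof -
  obtain R where "R > 0" and "\<forall>a b c d e. in_polydisc5 R a b c d e \<longrightarrow>
      has_double_powser (case_prod (xy_coeff f a b c d e)) R (f a b c d e)"
    by (rule analytic_near0_7_has_double_powser[OF an])
  note expansion = qdiff_near0_iff_phi_expansion_near0[OF q this, unfolded conj_assoc]
    phi_expansion_sums_at_y0[OF q this]
  show ?thesis
    unfolding conj_assoc by (intro conjI expansion(1) allI impI) (rule expansion(2))
qed

end
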